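(* Let $u,v$ be generalized Stirling permutations and $s,t$ planar trees of the same degree. Then (1) if $u\le_{Pw}v$ then $\pi(u)\le_{PT}\pi(v)$; (2) if $s\le_{PT}t$ then $\iota(s)\le_{Pw}\iota(t)$.
   Context: A planar tree has linearly ordered children at each node, each node being a leaf or having $\ge2$ children (internal node); degree = number of leaves minus one. A generalized Stirling permutation (GSP) is a planar tree together with a bijection $\kappa$ from its internal nodes to $\{1,\dots,N\}$ ($N$ = number of internal nodes) increasing from each internal node to its internal children; $\pi(u)$ is its underlying planar tree. Its word $\mathbf w(u)$: a leaf has empty word; a node $x$ with children $c_1,\dots,c_k$ has word $\mathbf w(c_1)\kappa(x)\mathbf w(c_2)\cdots\kappa(x)\mathbf w(c_k)$. For each planar tree $t$ there is exactly one GSP with underlying tree $t$ whose word is $213$-avoiding (no $i<j<k$ with $w_k>w_i>w_j$); it is denoted $\iota(t)$. Planar weak order: for packed words, $w^{-1}(a)=\{p:w_p=a\}$, $\mathrm{iInv}(w)=\{(a,b):a<b,\ \min w^{-1}(a)>\max w^{-1}(b)\}$, $T_a(w)$ = $w$ with letters $a,a+1$ swapped; the order is the reflexive–transitive closure of: $u$ is covered by $w$ iff $u=T_a(w)$ and $|\mathrm{iInv}(w)|=|\mathrm{iInv}(u)|+1$. On GSPs, $u\le_{Pw}v$ iff $\mathbf w(u)\le\mathbf w(v)$. Planar Tamari order: if an internal node $x$ has children $c_1,\dots,c_{a-1},y$ ($a\ge2$) with $y$ internal having children $d_1,\dots,d_{b+1}$ ($b\ge1$), the left rotation at $x$ replaces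 the subtree at $x$ by a node with children $z,d_2,\dots,d_{b+1}$, where $z$ is a new node with children $c_1,\dots,c_{a-1},d_1$. $\le_{PT}$ is the reflexive–transitive closure of "$t$ is a left rotation of $s$". *)

theory Defs
  imports Main
begin

datatype ptree = Leaf | Node "ptree list"

fun ptree_wf :: "ptree \<Rightarrow> bool" where
  "ptree_wf Leaf = True"
| "ptree_wf (Node cs) = (2 \<le> length cs \<and> (\<forall>c\<in>set cs. ptree_wf c))"

fun leaves :: "ptree \<Rightarrow> nat" where
  "leaves Leaf = 1"
| "leaves (Node cs) = sum_list (map leaves cs)"

definition degree :: "ptree \<Rightarrow> nat" where
  "degree t = leaves t - 1"

section \<open>Generalized Stirling permutations (internally labelled planar trees)\<close>

datatype ltree = LLeaf | LNode nat "ltree list"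

fun lwf :: "ltree \<Rightarrow> bool" where
  "lwf LLeaf = True"
| "lwf (LNode k cs) = (2 \<le> length cs \<and> (\<forall>c\<in>set cs. lwf c))"

fun labels :: "ltree \<Rightarrow> nat list" where
  "labels LLeaf = []"
| "labels (LNode k cs) = k # concat (map labels cs)"

fun increasing :: "ltree \<Rightarrow> bool" where
  "increasing LLeaf = True"
| "increasing (LNode k cs) =
     (\<forall>c\<in>set cs. increasing c \<and> (case c of LLeaf \<Rightarrow> True | LNode j _ \<Rightarrow> k < j))"

definition gsp :: "ltree \<Rightarrow> bool" where
  "gsp u \<longleftrightarrow> lwf u \<and> distinct (labels u) \<and> set (labels u) = {1..length (labels u)}
             \<and> increasing u"

fun pi :: "ltree \<Rightarrow> ptree" where
  "pi LLeaf = Leaf"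
| "pi (LNode k cs) = Node (map pi cs)"

fun wjoin :: "nat \<Rightarrow> nat list list \<Rightarrow> nat list" where
  "wjoin k [] = []"
| "wjoin k [x] = x"
| "wjoin k (x # y # r) = x @ [k] @ wjoin k (y # r)"

fun word :: "ltree \<Rightarrow> nat list" where
  "word LLeaf = []"
| "word (LNode k cs) = wjoin k (map word cs)"

definition packed :: "nat list \<Rightarrow> bool" where
  "packed w \<longleftrightarrow> set w = {1..card (set w)}"

definition positions :: "nat list \<Rightarrow> nat \<Rightarrow> nat set" where
  "positions w a = {p. p < length w \<and> w ! p = a}"

definition iInv :: "nat list \<Rightarrow> (nat \<times> nat) set" where
  "iInv w = {(a, b). a \<in> set w \<and> b \<in> set w \<and> a < b \<and>
                     Min (positions w a) > Max (positions w b)}"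

definition Tswap :: "nat \<Rightarrow> nat list \<Rightarrow> nat list" where
  "Tswap a w = map (\<lambda>x. if x = a then a + 1 else if x = a + 1 then a else x) w"

definition pw_cover :: "nat list \<Rightarrow> nat list \<Rightarrow> bool" where
  "pw_cover u w \<longleftrightarrow> packed u \<and> packed w \<and>
     (\<exists>a. u = Tswap a w \<and> card (iInv w) = card (iInv u) + 1)"

definition pw_le :: "nat list \<Rightarrow> nat list \<Rightarrow> bool" where
  "pw_le = pw_cover\<^sup>*\<^sup>*"

definition gsp_le :: "ltree \<Rightarrow> ltree \<Rightarrow> bool" where
  "gsp_le u v \<longleftrightarrow> pw_le (word u) (word v)"

inductive left_rot :: "ptree \<Rightarrow> ptree \<Rightarrow> bool" where
  root: "cs \<noteq> [] \<Longrightarrow> ds \<noteq> [] \<Longrightarrow>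
         left_rot (Node (cs @ [Node (d1 # ds)])) (Node (Node (cs @ [d1]) # ds))"
| sub: "left_rot c c' \<Longrightarrow> left_rot (Node (l @ c # r)) (Node (l @ c' # r))"

definition pt_le :: "ptree \<Rightarrow> ptree \<Rightarrow> bool" where
  "pt_le = left_rot\<^sup>*\<^sup>*"

definition avoids213 :: "nat list \<Rightarrow> bool" where
  "avoids213 w \<longleftrightarrow> \<not> (\<exists>i j k. i < j \<and> j < k \<and> k < length w \<and> w ! k > w ! i \<and> w ! i > w ! j)"

definition iota :: "ptree \<Rightarrow> ltree" where
  "iota t = (THE u. gsp u \<and> pi u = t \<and> avoids213 (word u))"

end

theory Submission
  imports Defs "HOL-Combinatorics.Transposition"
begin

text \<open>(1) Let \<open>w\<close> be the word of a GSP \<open>g\<close>. That \<open>T\<^sub>a(w)\<close> covers \<open>w\<close> in the planar weak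
  order means that every letter \<open>a\<close> of \<open>w\<close> precedes every letter \<open>a + 1\<close>. Exchanging the labels
  \<open>a\<close> and \<open>a + 1\<close> of \<open>g\<close> keeps it increasing unless \<open>a + 1\<close> is a child of \<open>a\<close>; by the ordering
  of the letters it is then the last child, and a left rotation at \<open>a\<close> produces a GSP with word
  \<open>T\<^sub>a(w)\<close>. So every cover is realised on trees by the identity or a left rotation, and
  since a GSP is determined by its word, \<open>\<pi>\<close> is order preserving.

  (2) \<open>\<iota>(t)\<close> labels \<open>t\<close> in the preorder of its mirror image. It is the maximum of the weak
  order among the GSPs on \<open>t\<close>: any other GSP admits a swap of adjacent labels that increases
  the number of inversions. Since in \<open>\<iota>(s)\<close> the last child of every node carries the next
  label, a left rotation \<open>s \<rightarrow> t\<close> is realised by a cover from \<open>\<iota>(s)\<close> to some GSP on \<open>t\<close>,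
  which lies below \<open>\<iota>(t)\<close>.\<close>

section \<open>Adjacent transpositions and the planar weak order\<close>

abbreviation swap_adj :: "nat \<Rightarrow> nat \<Rightarrow> nat" where
  "swap_adj a \<equiv> Transposition.transpose a (Suc a)"

lemma Tswap_eq_map_swap_adj: "Tswap a w = map (swap_adj a) w"
  by (simp add: Tswap_def transpose_def)

lemma swap_adj_less: "x < y \<Longrightarrow> (x, y) \<noteq> (a, Suc a) \<Longrightarrow> swap_adj a x < swap_adj a y"
  by (auto simp: transpose_def)

lemma map_swap_adj_id: "a \<notin> set xs \<Longrightarrow> Suc a \<notin> set xs \<Longrightarrow> map (swap_adj a) xs = xs"
  by (induction xs) auto

definition before :: "'a list \<Rightarrow> 'a \<Rightarrow> 'a \<Rightarrow> bool" where
  "before w x y \<longleftrightarrow> \<not> (\<exists>w1 w2. w = w1 @ w2 \<and> y \<in> set w1 \<and> x \<in> set w2)"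

lemma before_appendI: "y \<notin> set P \<Longrightarrow> x \<notin> set Q \<Longrightarrow> before (P @ Q) x y"
  unfolding before_def by (auto simp: append_eq_append_conv2)

lemma before_append_iff:
  assumes "x \<notin> set P" "y \<notin> set P" "x \<notin> set Q" "y \<notin> set Q"
  shows "before (P @ v @ Q) x y \<longleftrightarrow> before v x y"
proof
  assume "before (P @ v @ Q) x y"
  then show "before v x y"
    unfolding before_def by (metis append.assoc set_append Un_iff)
next
  assume b: "before v x y"
  show "before (P @ v @ Q) x y" unfolding before_def
  proof (clarify)
    fix w1 w2 assume split: "P @ v @ Q = w1 @ w2" "y \<in> set w1" "x \<in> set w2"
    then obtain us where "(w1 = P @ us \<and> us @ w2 = v @ Q) \<or> (w1 @ us = P \<and> w2 = us @ v @ Q)"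
      by (auto simp: append_eq_append_conv2)
    then show False
    proof
      assume w1: "w1 = P @ us \<and> us @ w2 = v @ Q"
      then obtain vs where "(us = v @ vs \<and> vs @ w2 = Q) \<or> (us @ vs = v \<and> w2 = vs @ Q)"
        by (auto simp: append_eq_append_conv2)
      then show False using assms b split w1 unfolding before_def by auto
    qed (use assms split in auto)
  qed
qed

lemma finite_positions: "finite (positions w x)"
  unfolding positions_def by auto

lemma positions_nonempty: "x \<in> set w \<Longrightarrow> positions w x \<noteq> {}"
  unfolding positions_def by (auto simp: in_set_conv_nth)

lemma Max_positions_less_Min_iff_before:
  assumes "x \<in> set w" "y \<in> set w" "x \<noteq> y"
  shows "Max (positions w x) < Min (positions w y) \<longleftrightarrow> before w x y"
proof
  assume m: "Max (positions w x) < Min (positions w y)"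
  show "before w x y" unfolding before_def
  proof (clarify)
    fix w1 w2 assume ww: "w = w1 @ w2" "y \<in> set w1" "x \<in> set w2"
    obtain i where i: "i < length w1" "w1 ! i = y" using ww by (auto simp: in_set_conv_nth)
    obtain j where j: "j < length w2" "w2 ! j = x" using ww by (auto simp: in_set_conv_nth)
    have "i \<in> positions w y" "length w1 + j \<in> positions w x"
      using i j ww unfolding positions_def by (auto simp: nth_append)
    then have "Min (positions w y) \<le> i" "length w1 + j \<le> Max (positions w x)"
      using finite_positions by auto
    then show False using m i by linarith
  qed
next
  assume b: "before w x y"
  show "Max (positions w x) < Min (positions w y)"
  proof (rule ccontr)
    assume not_less: "\<not> ?thesis"
    define i where "i = Min (positions w y)"
    define j where "j = Max (positions w x)"
    have i: "i < length w" "w ! i = y"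
      using Min_in[OF finite_positions positions_nonempty[OF assms(2)]] unfolding i_def positions_def by auto
    have j: "j < length w" "w ! j = x"
      using Max_in[OF finite_positions positions_nonempty[OF assms(1)]] unfolding j_def positions_def by auto
    have "i < j" using not_less i j assms(3) unfolding i_def j_def by (metis linorder_neqE_nat not_less)
    have "drop (i + 1) w ! (j - (i + 1)) = x" "j - (i + 1) < length (drop (i + 1) w)"
      using j \<open>i < j\<close> by auto
    then have "x \<in> set (drop (i + 1) w)" by (metis nth_mem)
    moreover have "y \<in> set (take (i + 1) w)" using i by (auto simp: in_set_conv_nth)
    ultimately show False using b unfolding before_def by (metis append_take_drop_id)
  qed
qed

lemma finite_iInv: "finite (iInv w)"
  by (rule finite_subset[of _ "set w \<times> set w"]) (auto simp: iInv_def)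

lemma card_iInv_le: "card (iInv w) \<le> card (set w) * card (set w)"
proof -
  have "card (iInv w) \<le> card (set w \<times> set w)"
    by (rule card_mono) (auto simp: iInv_def)
  then show ?thesis by (simp add: card_cartesian_product)
qed

lemma positions_map_swap_adj: "positions (map (swap_adj a) w) c = positions w (swap_adj a c)"
  unfolding positions_def by (auto simp: transpose_eq_iff)

lemma iInv_map_swap_adjD:
  assumes "(c, d) \<in> iInv (map (swap_adj a) w)" "(c, d) \<noteq> (a, Suc a)"
  shows "(swap_adj a c, swap_adj a d) \<in> iInv w - {(a, Suc a)}"
proof -
  have "c < d" "swap_adj a c \<in> set w" "swap_adj a d \<in> set w"
    "Max (positions w (swap_adj a d)) < Min (positions w (swap_adj a c))"
    using assms(1) unfolding iInv_def by (auto simp: positions_map_swap_adj in_transpose_image_iff)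
  moreover have "swap_adj a c < swap_adj a d" using swap_adj_less \<open>c < d\<close> assms(2) by blast
  moreover have "(swap_adj a c, swap_adj a d) \<noteq> (a, Suc a)"
    using \<open>c < d\<close> by (auto simp: transpose_eq_iff)
  ultimately show ?thesis
    unfolding iInv_def Diff_iff singleton_iff mem_Collect_eq prod.case by blast
qed

lemma iInv_map_swap_adj:
  "iInv (map (swap_adj a) w) - {(a, Suc a)}
     = (\<lambda>(c, d). (swap_adj a c, swap_adj a d)) ` (iInv w - {(a, Suc a)})"
proof (rule set_eqI, rule iffI)
  fix p assume p: "p \<in> iInv (map (swap_adj a) w) - {(a, Suc a)}"
  obtain c d where cd: "p = (c, d)" by (cases p)
  have "(swap_adj a c, swap_adj a d) \<in> iInv w - {(a, Suc a)}"
    using p unfolding cd by (intro iInv_map_swap_adjD) auto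
  moreover have "p = (\<lambda>(c, d). (swap_adj a c, swap_adj a d)) (swap_adj a c, swap_adj a d)"
    unfolding cd by simp
  ultimately show "p \<in> (\<lambda>(c, d). (swap_adj a c, swap_adj a d)) ` (iInv w - {(a, Suc a)})"
    by (rule rev_image_eqI)
next
  fix p assume "p \<in> (\<lambda>(c, d). (swap_adj a c, swap_adj a d)) ` (iInv w - {(a, Suc a)})"
  then obtain c d where cd: "(c, d) \<in> iInv w - {(a, Suc a)}" "p = (swap_adj a c, swap_adj a d)"
    by auto
  have "(c, d) \<in> iInv (map (swap_adj a) (map (swap_adj a) w))" using cd(1) by simp
  then show "p \<in> iInv (map (swap_adj a) w) - {(a, Suc a)}"
    unfolding cd(2) using cd(1) by (intro iInv_map_swap_adjD) auto
qed

text \<open>Transposing \<open>a\<close> and \<open>Suc a\<close> is a bijection on all other inversion pairs, so only the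
  pair \<open>(a, Suc a)\<close> itself can make the number of inversions change.\<close>
lemma card_iInv_map_swap_adj:
  "card (iInv (map (swap_adj a) w)) + (if (a, Suc a) \<in> iInv w then 1 else 0)
     = card (iInv w) + (if (a, Suc a) \<in> iInv (map (swap_adj a) w) then 1 else 0)"
proof -
  have "inj_on (\<lambda>(c, d). (swap_adj a c, swap_adj a d)) X" for X
    by (rule inj_onI) (auto dest: transpose_eq_imp_eq)
  then have "card (iInv (map (swap_adj a) w) - {(a, Suc a)}) = card (iInv w - {(a, Suc a)})"
    by (simp add: iInv_map_swap_adj card_image)
  moreover have remove_pair:
    "card (iInv v) = card (iInv v - {(a, Suc a)}) + (if (a, Suc a) \<in> iInv v then 1 else 0)" for v
    using finite_iInv[of v] card.remove[of "iInv v" "(a, Suc a)"] by auto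
  ultimately show ?thesis
    using remove_pair[of w] remove_pair[of "map (swap_adj a) w"] by linarith
qed

lemma card_iInv_map_swap_adj_eq_Suc_iff:
  "card (iInv (map (swap_adj a) w)) = card (iInv w) + 1
     \<longleftrightarrow> a \<in> set w \<and> Suc a \<in> set w \<and> before w a (Suc a)"
proof -
  have swapped_pair: "(a, Suc a) \<in> iInv (map (swap_adj a) w)
      \<longleftrightarrow> a \<in> set w \<and> Suc a \<in> set w \<and> before w a (Suc a)"
    using Max_positions_less_Min_iff_before[of a w "Suc a"]
    unfolding iInv_def by (auto simp: positions_map_swap_adj in_transpose_image_iff)
  have "(a, Suc a) \<notin> iInv w" if "a \<in> set w" "Suc a \<in> set w" "before w a (Suc a)"
  proof -
    have Min_le_Max: "Min (positions w x) \<le> Max (positions w x)" if "x \<in> set w" for x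
      using that by (meson Max_ge Min_in finite_positions positions_nonempty)
    have "Max (positions w a) < Min (positions w (Suc a))"
      using that Max_positions_less_Min_iff_before[of a w "Suc a"] by simp
    then show ?thesis
      using Min_le_Max[OF that(1)] Min_le_Max[OF that(2)] unfolding iInv_def by auto
  qed
  then show ?thesis using card_iInv_map_swap_adj[of a w] swapped_pair by (auto split: if_splits)
qed

lemma pw_cover_iff_before:
  "pw_cover w w' \<longleftrightarrow> packed w \<and> packed w' \<and>
     (\<exists>a. w' = map (swap_adj a) w \<and> a \<in> set w \<and> Suc a \<in> set w \<and> before w a (Suc a))"
proof -
  have "w = Tswap a w' \<longleftrightarrow> w' = map (swap_adj a) w" for a
    by (auto simp: Tswap_eq_map_swap_adj)
  then show ?thesis
    unfolding pw_cover_def using card_iInv_map_swap_adj_eq_Suc_iff by auto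
qed

lemma wjoin_Cons: "ws \<noteq> [] \<Longrightarrow> wjoin k (w # ws) = w @ [k] @ wjoin k ws"
  by (cases ws) auto

lemma wjoin_append:
  "ws \<noteq> [] \<Longrightarrow> vs \<noteq> [] \<Longrightarrow> wjoin k (ws @ vs) = wjoin k ws @ [k] @ wjoin k vs"
proof (induction ws)
  case (Cons w ws)
  then show ?case by (cases "ws = []") (auto simp: wjoin_Cons)
qed simp

lemma map_wjoin: "map f (wjoin k ws) = wjoin (f k) (map (map f) ws)"
  by (induction k ws rule: wjoin.induct) auto

lemma set_wjoin:
  "ws \<noteq> [] \<Longrightarrow> set (wjoin k ws) = (\<Union>w\<in>set ws. set w) \<union> (if 2 \<le> length ws then {k} else {})"
  by (induction k ws rule: wjoin.induct) auto

lemma set_wjoin_subset: "set (wjoin k ws) \<subseteq> insert k (\<Union>w\<in>set ws. set w)"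
  by (induction k ws rule: wjoin.induct) auto

lemma set_subset_wjoin: "w \<in> set ws \<Longrightarrow> set w \<subseteq> set (wjoin k ws)"
  by (induction k ws rule: wjoin.induct) auto

lemma wjoin_infix:
  "\<exists>P Q. wjoin k (ws @ v # vs) = P @ v @ Q
     \<and> set P \<subseteq> insert k (\<Union>w\<in>set ws. set w) \<and> set Q \<subseteq> insert k (\<Union>w\<in>set vs. set w)"
proof (induction ws)
  case Nil
  show ?case
  proof (cases "vs = []")
    case False
    then show ?thesis using set_wjoin_subset[of k vs]
      by (intro exI[of _ "[]"] exI[of _ "[k] @ wjoin k vs"]) (auto simp: wjoin_Cons)
  qed (intro exI[of _ "[]"], auto)
next
  case (Cons w ws)
  then obtain P Q where "wjoin k (ws @ v # vs) = P @ v @ Q"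
    "set P \<subseteq> insert k (\<Union>w\<in>set ws. set w)" "set Q \<subseteq> insert k (\<Union>w\<in>set vs. set w)"
    by blast
  then show ?case by (intro exI[of _ "w @ [k] @ P"] exI[of _ Q]) (auto simp: wjoin_Cons)
qed

lemma wjoin_inj:
  assumes "\<forall>w\<in>set ws. k \<notin> set w" "\<forall>w\<in>set ws'. k \<notin> set w" "ws \<noteq> []" "ws' \<noteq> []"
    and "wjoin k ws = wjoin k ws'"
  shows "ws = ws'"
  using assms
proof (induction ws arbitrary: ws')
  case (Cons w ws)
  obtain w' vs' where ws': "ws' = w' # vs'" using Cons.prems(4) by (cases ws') auto
  have k: "k \<notin> set w" "k \<notin> set w'" using Cons.prems(1,2) ws' by auto
  have eq: "wjoin k (w # ws) = wjoin k (w' # vs')" using Cons.prems(5) ws' by simp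
  have "ws = [] \<longleftrightarrow> vs' = []"
  proof
    show "vs' = []" if "ws = []"
    proof (rule ccontr)
      assume "vs' \<noteq> []"
      then have "w = w' @ [k] @ wjoin k vs'" using eq that by (simp add: wjoin_Cons)
      with k show False by simp
    qed
    show "ws = []" if "vs' = []"
    proof (rule ccontr)
      assume "ws \<noteq> []"
      then have "w' = w @ [k] @ wjoin k ws" using eq that by (simp add: wjoin_Cons)
      with k show False by simp
    qed
  qed
  show ?case
  proof (cases "ws = []")
    case False
    then have "wjoin k (w # ws) = w @ k # wjoin k ws" "wjoin k (w' # vs') = w' @ k # wjoin k vs'"
      using \<open>ws = [] \<longleftrightarrow> vs' = []\<close> by (simp_all add: wjoin_Cons)
    then have split: "w @ k # wjoin k ws = w' @ k # wjoin k vs'" using eq by simp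
    have "takeWhile (\<lambda>x. x \<noteq> k) (v @ k # r) = v" if "k \<notin> set v" for v r
      using that by (auto simp: takeWhile_tail)
    then have "w = w'" using split k by metis
    then have "wjoin k ws = wjoin k vs'" using split by simp
    then show ?thesis
      using \<open>w = w'\<close> Cons.IH[of vs'] Cons.prems(1,2) ws' False \<open>ws = [] \<longleftrightarrow> vs' = []\<close> by simp
  qed (use eq ws' \<open>ws = [] \<longleftrightarrow> vs' = []\<close> in simp)
qed simp

fun relabel :: "(nat \<Rightarrow> nat) \<Rightarrow> ltree \<Rightarrow> ltree" where
  "relabel f LLeaf = LLeaf"
| "relabel f (LNode k cs) = LNode (f k) (map (relabel f) cs)"

lemma word_relabel: "word (relabel f g) = map f (word g)"
  by (induction g) (simp_all add: map_wjoin comp_def cong: map_cong)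

lemma labels_relabel: "labels (relabel f g) = map f (labels g)"
  by (induction g) (simp_all add: map_concat comp_def cong: map_cong)

lemma pi_relabel: "pi (relabel f g) = pi g"
  by (induction g) (auto simp: comp_def)

lemma lwf_relabel: "lwf (relabel f g) = lwf g"
  by (induction g) auto

lemma set_word_subset: "set (word g) \<subseteq> set (labels g)"
proof (induction g)
  case (LNode k cs)
  then show ?case using set_wjoin_subset[of k "map word cs"] by fastforce
qed simp

lemma set_word: "lwf g \<Longrightarrow> set (word g) = set (labels g)"
proof (induction g)
  case (LNode k cs)
  then have "cs \<noteq> []" by auto
  with LNode show ?case by (auto simp: set_wjoin)
qed simp

lemma increasing_root_less:
  "increasing (LNode k cs) \<Longrightarrow> c \<in> set cs \<Longrightarrow> x \<in> set (labels c) \<Longrightarrow> k < x"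
proof (induction c arbitrary: k cs)
  case (LNode j ds)
  have "k < j" using LNode.prems(1,2) by auto
  moreover have "j < x" if "x \<noteq> j"
    using that LNode.prems LNode.IH by fastforce
  ultimately show ?case by (cases "x = j") auto
qed simp

lemma word_inj:
  "lwf g \<Longrightarrow> increasing g \<Longrightarrow> lwf g' \<Longrightarrow> increasing g' \<Longrightarrow> word g = word g' \<Longrightarrow> g = g'"
proof (induction g arbitrary: g')
  case LLeaf
  then show ?case using set_word[of g'] by (cases g') auto
next
  case (LNode k cs)
  obtain k' cs' where g': "g' = LNode k' cs'"
    using LNode.prems set_word[of "LNode k cs"] by (cases g') auto
  have min_word: "set (word (LNode j ds)) = insert j (\<Union>c\<in>set ds. set (labels c))"
    "\<forall>x\<in>\<Union>c\<in>set ds. set (labels c). j < x"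
    if "lwf (LNode j ds)" "increasing (LNode j ds)" for j ds
    using that set_word[of "LNode j ds"] increasing_root_less[OF that(2)] by auto
  have "k = k'"
    using min_word[of k cs] min_word[of k' cs'] LNode.prems g'
    by (metis insert_iff less_irrefl order.strict_trans)
  moreover have "map word cs = map word cs'"
  proof (rule wjoin_inj)
    show "\<forall>w\<in>set (map word cs). k \<notin> set w" "\<forall>w\<in>set (map word cs'). k \<notin> set w"
      using LNode.prems g' \<open>k = k'\<close> set_word_subset increasing_root_less[of k cs]
        increasing_root_less[of k cs'] by fastforce+
  qed (use LNode.prems g' \<open>k = k'\<close> in auto)
  then have "cs = cs'"
  proof (intro nth_equalityI)
    show "length cs = length cs'" using \<open>map word cs = map word cs'\<close> by (rule map_eq_imp_length_eq)
    show "cs ! i = cs' ! i" if "i < length cs" for i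
      using LNode.IH[of "cs ! i" "cs' ! i"] LNode.prems g' that \<open>length cs = length cs'\<close>
        nth_map[of i cs word] nth_map[of i cs' word] \<open>map word cs = map word cs'\<close> by auto
  qed
  ultimately show ?case using g' by simp
qed

lemma packed_word: "gsp g \<Longrightarrow> packed (word g)"
  unfolding gsp_def packed_def by (simp add: set_word distinct_card)

lemma notin_wjoin_words:
  "x \<noteq> k \<Longrightarrow> (\<And>c. c \<in> set cs \<Longrightarrow> x \<notin> set (labels c)) \<Longrightarrow> x \<notin> set (wjoin k (map word cs))"
  using set_wjoin_subset[of k "map word cs"] set_word_subset by fastforce

lemma map_swap_adj_word_id:
  "a \<notin> set (labels c) \<Longrightarrow> Suc a \<notin> set (labels c) \<Longrightarrow> map (swap_adj a) (word c) = word c"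
  using set_word_subset[of c] by (intro map_swap_adj_id) auto

lemma map_swap_adj_wjoin:
  assumes "\<And>x. x \<in> set xs \<Longrightarrow> a \<notin> set (labels x) \<and> Suc a \<notin> set (labels x)"
  shows "map (swap_adj a) (wjoin j (map word xs)) = wjoin (swap_adj a j) (map word xs)"
proof -
  have "map (map (swap_adj a)) (map word xs) = map word xs"
    using assms map_swap_adj_word_id by (induction xs) auto
  then show ?thesis by (simp only: map_wjoin)
qed

lemma labels_siblings_disjoint:
  "distinct (labels (LNode k (l @ c # r))) \<Longrightarrow> x \<in> set l \<union> set r
     \<Longrightarrow> set (labels c) \<inter> set (labels x) = {}"
  by (auto simp: distinct_append)

text \<open>The tree \<open>h\<close> may have a different shape than \<open>g\<close>: only its word is prescribed.\<close>
definition swapped :: "nat \<Rightarrow> ltree \<Rightarrow> ltree \<Rightarrow> bool" where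
  "swapped a g h \<longleftrightarrow> lwf h \<and> increasing h \<and> length (labels h) = length (labels g)
     \<and> word h = map (swap_adj a) (word g)"

lemma gsp_swapped:
  assumes "gsp g" "a \<in> set (labels g)" "Suc a \<in> set (labels g)" "swapped a g h"
  shows "gsp h"
proof -
  let ?N = "length (labels g)"
  have "set (labels h) = swap_adj a ` set (labels g)"
    using assms(1,4) set_word unfolding gsp_def swapped_def by (metis set_map)
  then have set_h: "set (labels h) = {1..?N}"
    using assms(1,2,3) unfolding gsp_def by simp
  then have "card (set (labels h)) = length (labels h)"
    using assms(4) unfolding swapped_def by simp
  then have "distinct (labels h)" by (rule card_distinct)
  then show ?thesis
    using assms(4) set_h unfolding gsp_def swapped_def by simp
qed

lemma pw_cover_swapped:
  assumes "gsp g" "a \<in> set (labels g)" "Suc a \<in> set (labels g)" "before (word g) a (Suc a)"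
    and "swapped a g h"
  shows "pw_cover (word g) (word h)"
  unfolding pw_cover_iff_before
  using assms packed_word gsp_swapped set_word[of g] unfolding gsp_def swapped_def by metis

lemma swapped_relabel:
  "lwf g \<Longrightarrow> increasing (relabel (swap_adj a) g) \<Longrightarrow> swapped a g (relabel (swap_adj a) g)"
  by (simp add: swapped_def lwf_relabel labels_relabel word_relabel del: relabel.simps)

lemma increasing_relabel_swap_adj_LNode:
  assumes "increasing (LNode k cs)" "\<forall>c\<in>set cs. increasing (relabel (swap_adj a) c)"
    and "k = a \<Longrightarrow> \<forall>c\<in>set cs. Suc a \<notin> set (labels c)"
  shows "increasing (relabel (swap_adj a) (LNode k cs))"
proof -
  have "swap_adj a k < swap_adj a j" if "LNode j ds \<in> set cs" for j ds
  proof (rule swap_adj_less)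
    show "k < j" using assms(1) that by fastforce
    show "(k, j) \<noteq> (a, Suc a)" using assms(3) that by fastforce
  qed
  then have "case relabel (swap_adj a) c of LLeaf \<Rightarrow> True | LNode j _ \<Rightarrow> swap_adj a k < j"
    if "c \<in> set cs" for c
    using that by (cases c) auto
  then show ?thesis using assms(2) by simp
qed

lemma increasing_relabel_swap_adj:
  "increasing g \<Longrightarrow> \<not> (a \<in> set (labels g) \<and> Suc a \<in> set (labels g))
     \<Longrightarrow> increasing (relabel (swap_adj a) g)"
proof (induction g)
  case (LNode k cs)
  show ?case
  proof (rule increasing_relabel_swap_adj_LNode)
    show "\<forall>c\<in>set cs. increasing (relabel (swap_adj a) c)"
      using LNode by fastforce
  qed (use LNode.prems in auto)
qed simp

text \<open>The link between the two orders: rotating at \<open>k\<close> when its last child is \<open>Suc k\<close> only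
  exchanges the letters \<open>k\<close> and \<open>Suc k\<close> of the word.\<close>
lemma swapped_rotate_root:
  fixes k :: nat and d :: ltree and l ds :: "ltree list"
  defines "g \<equiv> LNode k (l @ [LNode (Suc k) (d # ds)])"
    and "h \<equiv> LNode k (LNode (Suc k) (l @ [d]) # ds)"
  assumes "lwf g" "increasing g" "distinct (labels g)" "l \<noteq> []" "ds \<noteq> []"
  shows "swapped k g h" "before (word g) k (Suc k)" "left_rot (pi g) (pi h)"
proof -
  have inc_last: "increasing (LNode (Suc k) (d # ds))" using assms(4) unfolding g_def by simp
  have "Suc k \<notin> set (concat (map labels l))"
    using assms(5) unfolding g_def by (simp add: distinct_append)
  then have avoid_l: "k \<notin> set (labels x) \<and> Suc k \<notin> set (labels x)" if "x \<in> set l" for x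
    using that increasing_root_less[OF assms(4)[unfolded g_def], of x] by auto
  have avoid_d: "k \<notin> set (labels x) \<and> Suc k \<notin> set (labels x)" if "x \<in> set (d # ds)" for x
    using that increasing_root_less[OF inc_last, of x] by fastforce
  have word_g: "word g = (wjoin k (map word l) @ [k] @ word d) @ (Suc k # wjoin (Suc k) (map word ds))"
    unfolding g_def using assms(6,7) by (simp add: wjoin_append wjoin_Cons)
  have word_h: "word h = wjoin (Suc k) (map word l) @ [Suc k] @ word d @ [k] @ wjoin k (map word ds)"
    unfolding h_def using assms(6,7) by (simp add: wjoin_append wjoin_Cons)
  have "word h = map (swap_adj k) (word g)"
    using map_swap_adj_wjoin[of l k k] map_swap_adj_wjoin[of ds k "Suc k"]
      map_swap_adj_word_id[of k d] avoid_l avoid_d unfolding word_g word_h by simp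
  moreover have "lwf h" using assms(3,6,7) unfolding g_def h_def by auto
  moreover have "increasing h"
  proof -
    have "increasing x \<and> (case x of LLeaf \<Rightarrow> True | LNode j _ \<Rightarrow> Suc k < j)" if "x \<in> set l" for x
    proof -
      have "increasing x" "case x of LLeaf \<Rightarrow> True | LNode j _ \<Rightarrow> k < j"
        using that assms(4) unfolding g_def by auto
      then show ?thesis using avoid_l[OF that] by (cases x) auto
    qed
    then show ?thesis using inc_last unfolding h_def by (auto split: ltree.splits)
  qed
  ultimately show "swapped k g h" unfolding swapped_def g_def h_def by simp
  have "Suc k \<notin> set (wjoin k (map word l))" "k \<notin> set (wjoin (Suc k) (map word ds))"
    using notin_wjoin_words avoid_l avoid_d by auto
  moreover have "Suc k \<notin> set (word d)" using avoid_d set_word_subset by auto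
  ultimately show "before (word g) k (Suc k)" unfolding word_g by (intro before_appendI) auto
  show "left_rot (pi g) (pi h)"
    using left_rot.root[of "map pi l" "map pi ds" "pi d"] assms(6,7) unfolding g_def h_def by simp
qed

lemma swapped_child:
  fixes k a :: nat and c c' :: ltree and l r :: "ltree list"
  defines "g \<equiv> LNode k (l @ c # r)"
  assumes "lwf g" "increasing g" "distinct (labels g)"
    and "a \<in> set (labels c)" "Suc a \<in> set (labels c)" "swapped a c c'"
  shows "swapped a g (LNode k (l @ c' # r))"
proof -
  have k_less: "k < y" if "y \<in> set (labels c)" for y
    using increasing_root_less[OF assms(3)[unfolded g_def], of c y] that by simp
  then have "k < a" using assms(5) .
  have avoid: "a \<notin> set (labels x) \<and> Suc a \<notin> set (labels x)" if "x \<in> set l \<union> set r" for x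
    using labels_siblings_disjoint[OF assms(4)[unfolded g_def] that] assms(5,6) by blast
  have "set (labels c') = swap_adj a ` set (labels c)"
    using assms(2,7) set_word[of c'] set_word[of c] unfolding g_def swapped_def by simp
  have "\<forall>x\<in>set (labels c'). k < x"
  proof
    fix x assume "x \<in> set (labels c')"
    then obtain y where "y \<in> set (labels c)" "x = swap_adj a y"
      using \<open>set (labels c') = swap_adj a ` set (labels c)\<close> by blast
    then show "k < x" using k_less \<open>k < a\<close> by (auto simp: transpose_def)
  qed
  then have "case c' of LLeaf \<Rightarrow> True | LNode j _ \<Rightarrow> k < j" by (cases c') auto
  moreover have "word (LNode k (l @ c' # r)) = map (swap_adj a) (word g)"
  proof -
    have "map (swap_adj a) (word g)
        = wjoin (swap_adj a k) (map (map (swap_adj a)) (map word l @ word c # map word r))"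
      unfolding g_def by (simp only: word.simps map_wjoin map_append list.map)
    also have "\<dots> = wjoin k (map word l @ word c' # map word r)"
    proof -
      have "map (map (swap_adj a) \<circ> word) l = map word l" "map (map (swap_adj a) \<circ> word) r = map word r"
        using avoid map_swap_adj_word_id by (auto intro!: map_cong)
      moreover have "swap_adj a k = k" using \<open>k < a\<close> by simp
      ultimately show ?thesis using assms(7) unfolding swapped_def
        by (simp only: map_append list.map map_map)
    qed
    finally show ?thesis by simp
  qed
  ultimately show ?thesis
    using assms(2,3,7) unfolding g_def swapped_def by auto
qed

lemma before_word_child_iff:
  fixes k a :: nat and c :: ltree and l r :: "ltree list"
  defines "g \<equiv> LNode k (l @ c # r)"
  assumes "increasing g" "distinct (labels g)" "a \<in> set (labels c)" "Suc a \<in> set (labels c)"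
  shows "before (word g) a (Suc a) \<longleftrightarrow> before (word c) a (Suc a)"
proof -
  have "k < a" using assms(2,4) increasing_root_less unfolding g_def by fastforce
  have avoid: "a \<notin> set (word x) \<and> Suc a \<notin> set (word x)" if "x \<in> set l \<union> set r" for x
    using labels_siblings_disjoint[OF assms(3)[unfolded g_def] that] assms(4,5) set_word_subset by blast
  obtain P Q where "word g = P @ word c @ Q"
    "set P \<subseteq> insert k (\<Union>w\<in>set (map word l). set w)" "set Q \<subseteq> insert k (\<Union>w\<in>set (map word r). set w)"
    using wjoin_infix[of k "map word l" "word c" "map word r"] unfolding g_def by auto
  moreover have "x \<notin> insert k (\<Union>w\<in>set (map word xs). set w)"
    if "x = a \<or> x = Suc a" "xs = l \<or> xs = r" for x xs
    using that avoid \<open>k < a\<close> by auto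
  ultimately have "a \<notin> set P" "Suc a \<notin> set P" "a \<notin> set Q" "Suc a \<notin> set Q"
    by blast+
  moreover note \<open>word g = P @ word c @ Q\<close>
  ultimately show ?thesis using before_append_iff by metis
qed

section \<open>From the planar weak order to the planar Tamari order\<close>

lemma before_succ_last_child:
  assumes "lwf (LNode a cs)" "increasing (LNode a cs)" "distinct (labels (LNode a cs))"
    and "Suc a \<in> set (labels (LNode a cs))" "before (word (LNode a cs)) a (Suc a)"
  shows "\<exists>l d ds. cs = l @ [LNode (Suc a) (d # ds)] \<and> l \<noteq> [] \<and> ds \<noteq> []"
proof -
  obtain c where c: "c \<in> set cs" "Suc a \<in> set (labels c)" using assms(4) by auto
  then obtain l r where cs: "cs = l @ c # r" by (meson split_list)
  obtain j es where c_def: "c = LNode j es" using c(2) by (cases c) auto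
  have "a < j" using assms(2) c(1) c_def by auto
  have "j = Suc a"
  proof (rule ccontr)
    assume "j \<noteq> Suc a"
    then have "Suc a \<in> set (concat (map labels es))" using c(2) c_def by auto
    then have "j < Suc a" using assms(2) c increasing_root_less[of j es] c_def by auto
    with \<open>a < j\<close> show False by simp
  qed
  have "r = []"
  proof (rule ccontr)
    assume "r \<noteq> []"
    then have "word (LNode a cs) = wjoin a (map word l @ [word c]) @ [a] @ wjoin a (map word r)"
      using wjoin_append[of "map word l @ [word c]" "map word r" a] cs by simp
    moreover have "Suc a \<in> set (word c)"
      using assms(1) c(1) c_def \<open>j = Suc a\<close> set_word[of c] by auto
    then have "Suc a \<in> set (wjoin a (map word l @ [word c]))"
      using set_subset_wjoin[of "word c" "map word l @ [word c]" a] by auto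
    ultimately show False using assms(5) unfolding before_def by force
  qed
  have "l \<noteq> []" using assms(1) cs \<open>r = []\<close> by auto
  moreover have "Suc (Suc 0) \<le> length es" using assms(1) c(1) c_def by auto
  then obtain d ds where "es = d # ds" "ds \<noteq> []" by (auto simp: Suc_le_length_iff)
  ultimately show ?thesis using cs c_def \<open>j = Suc a\<close> \<open>r = []\<close> by blast
qed

text \<open>If the root is \<open>a\<close> we rotate, if \<open>a\<close> and \<open>Suc a\<close> lie in one child we recurse into it,
  and otherwise relabelling keeps the tree increasing.\<close>
lemma exists_swapped_if_before:
  "lwf g \<Longrightarrow> increasing g \<Longrightarrow> distinct (labels g) \<Longrightarrow> a \<in> set (labels g) \<Longrightarrow> Suc a \<in> set (labels g)
    \<Longrightarrow> before (word g) a (Suc a) \<Longrightarrow> \<exists>h. swapped a g h \<and> (pi h = pi g \<or> left_rot (pi g) (pi h))"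
proof (induction g)
  case (LNode k cs)
  consider "k = a" | "k = Suc a" | "k \<noteq> a" "k \<noteq> Suc a" by blast
  then show ?case
  proof cases
    case 1
    then obtain l d ds where "cs = l @ [LNode (Suc k) (d # ds)]" "l \<noteq> []" "ds \<noteq> []"
      using before_succ_last_child LNode.prems by blast
    then show ?thesis using swapped_rotate_root(1,3) LNode.prems 1 by blast
  next
    case 2
    then obtain c where "c \<in> set cs" "a \<in> set (labels c)" using LNode.prems(4) by auto
    then show ?thesis using 2 increasing_root_less LNode.prems(2) by fastforce
  next
    case 3
    show ?thesis
    proof (cases "\<exists>c\<in>set cs. a \<in> set (labels c) \<and> Suc a \<in> set (labels c)")
      case True
      then obtain c where c: "c \<in> set cs" "a \<in> set (labels c)" "Suc a \<in> set (labels c)" by blast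
      then obtain l r where cs: "cs = l @ c # r" by (meson split_list)
      have "before (word c) a (Suc a)"
        using before_word_child_iff LNode.prems(2,3,6) c(2,3) cs by blast
      then obtain c' where "swapped a c c'" "pi c' = pi c \<or> left_rot (pi c) (pi c')"
        using LNode.IH[OF c(1)] LNode.prems(1-3) c by (auto simp: distinct_concat_iff)
      moreover have "swapped a (LNode k cs) (LNode k (l @ c' # r))"
        using swapped_child LNode.prems(1-3) c(2,3) cs \<open>swapped a c c'\<close> by blast
      ultimately show ?thesis using cs left_rot.sub by fastforce
    next
      case False
      have "increasing (relabel (swap_adj a) (LNode k cs))"
      proof (rule increasing_relabel_swap_adj_LNode)
        show "\<forall>c\<in>set cs. increasing (relabel (swap_adj a) c)"
          using increasing_relabel_swap_adj LNode.prems(2) False by simp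
      qed (use LNode.prems(2) 3 in auto)
      then show ?thesis using swapped_relabel LNode.prems(1) pi_relabel by blast
    qed
  qed
qed simp

lemma exists_gsp_if_pw_le_word:
  "pw_le (word g) w \<Longrightarrow> gsp g \<Longrightarrow> \<exists>h. gsp h \<and> word h = w \<and> pt_le (pi g) (pi h)"
  unfolding pw_le_def
proof (induction rule: rtranclp_induct)
  case base
  then show ?case unfolding pt_le_def by auto
next
  case (step w w')
  then obtain h where h: "gsp h" "word h = w" "pt_le (pi g) (pi h)" by blast
  obtain a where a: "w' = map (swap_adj a) w" "a \<in> set w" "Suc a \<in> set w" "before w a (Suc a)"
    using step(2) unfolding pw_cover_iff_before by blast
  then have "a \<in> set (labels h)" "Suc a \<in> set (labels h)"
    using h set_word unfolding gsp_def by auto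
  then obtain h' where "swapped a h h'" "pi h' = pi h \<or> left_rot (pi h) (pi h')"
    using exists_swapped_if_before h a(4) unfolding gsp_def by blast
  moreover have "gsp h'"
    using gsp_swapped h(1) \<open>a \<in> set (labels h)\<close> \<open>Suc a \<in> set (labels h)\<close> \<open>swapped a h h'\<close> .
  ultimately show ?case
    using h a(1) unfolding swapped_def pt_le_def by (auto intro: rtranclp.rtrancl_into_rtrancl)
qed

theorem pt_le_pi_if_gsp_le: "gsp u \<Longrightarrow> gsp v \<Longrightarrow> gsp_le u v \<Longrightarrow> pt_le (pi u) (pi v)"
  unfolding gsp_le_def using exists_gsp_if_pw_le_word word_inj unfolding gsp_def by metis


section \<open>The 213-avoiding labelling\<close>

fun internal_nodes :: "ptree \<Rightarrow> nat" where
  "internal_nodes Leaf = 0"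
| "internal_nodes (Node cs) = Suc (sum_list (map internal_nodes cs))"

lemma length_labels: "length (labels g) = internal_nodes (pi g)"
  by (induction g) (simp_all add: length_concat comp_def cong: map_cong)

text \<open>Numbers the internal nodes from \<open>n\<close> on in the preorder of the mirror image of the tree.\<close>
fun mirror_label :: "nat \<Rightarrow> ptree \<Rightarrow> ltree"
  and mirror_labels :: "nat \<Rightarrow> ptree list \<Rightarrow> ltree list" where
  "mirror_label n Leaf = LLeaf"
| "mirror_label n (Node cs) = LNode n (mirror_labels (Suc n) cs)"
| "mirror_labels n [] = []"
| "mirror_labels n (c # cs) =
     mirror_label (n + sum_list (map internal_nodes cs)) c # mirror_labels n cs"

lemma labels_mirror_label:
  shows "pi (mirror_label n t) = t \<and> distinct (labels (mirror_label n t))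
     \<and> set (labels (mirror_label n t)) = {n..<n + internal_nodes t}"
    and "map pi (mirror_labels n cs) = cs \<and> distinct (concat (map labels (mirror_labels n cs)))
     \<and> set (concat (map labels (mirror_labels n cs))) = {n..<n + sum_list (map internal_nodes cs)}"
proof (induction n t and n cs rule: mirror_label_mirror_labels.induct)
  case (2 n cs)
  moreover have "insert n {Suc n..<Suc n + m} = {n..<n + Suc m}" for m by auto
  ultimately show ?case by simp
next
  case (4 n c cs)
  let ?m = "n + sum_list (map internal_nodes cs)"
  have "{?m..<?m + internal_nodes c} \<union> {n..<?m} = {n..<n + sum_list (map internal_nodes (c # cs))}"
    by auto
  then show ?case using 4 by auto
qed simp_all

lemma pi_mirror_label [simp]: "pi (mirror_label n t) = t"
  using labels_mirror_label(1) by blast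

lemma lwf_mirror_label:
  shows "ptree_wf t \<Longrightarrow> lwf (mirror_label n t)"
    and "\<forall>c\<in>set cs. ptree_wf c \<Longrightarrow> (\<forall>x\<in>set (mirror_labels n cs). lwf x)
           \<and> length (mirror_labels n cs) = length cs"
  by (induction n t and n cs rule: mirror_label_mirror_labels.induct) auto

lemma increasing_mirror_label:
  shows "increasing (mirror_label n t)"
    and "\<forall>x\<in>set (mirror_labels n cs). increasing x \<and> (case x of LLeaf \<Rightarrow> True | LNode j _ \<Rightarrow> n \<le> j)"
proof (induction n t and n cs rule: mirror_label_mirror_labels.induct)
  case (2 n cs)
  then show ?case by (auto split: ltree.splits)
next
  case (4 n c cs)
  then show ?case by (cases c) auto
qed auto

lemma gsp_mirror_label: "ptree_wf t \<Longrightarrow> gsp (mirror_label 1 t)"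
  using labels_mirror_label(1)[of 1 t] lwf_mirror_label(1) increasing_mirror_label(1)[of 1 t]
    length_labels[of "mirror_label 1 t"]
  unfolding gsp_def by (auto simp: atLeastLessThanSuc_atLeastAtMost)

fun last_child_succ :: "ltree \<Rightarrow> bool" where
  "last_child_succ LLeaf = True"
| "last_child_succ (LNode k cs) = ((\<forall>c\<in>set cs. last_child_succ c) \<and>
     (cs \<noteq> [] \<longrightarrow> (case last cs of LLeaf \<Rightarrow> True | LNode j _ \<Rightarrow> j = Suc k)))"

lemma last_mirror_labels: "cs \<noteq> [] \<Longrightarrow> last (mirror_labels n cs) = mirror_label n (last cs)"
proof (induction cs)
  case (Cons c cs)
  then show ?case by (cases cs) auto
qed simp

lemma last_child_succ_mirror_label:
  shows "last_child_succ (mirror_label n t)" and "\<forall>x\<in>set (mirror_labels n cs). last_child_succ x"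
proof (induction n t and n cs rule: mirror_label_mirror_labels.induct)
  case (2 n cs)
  have "case mirror_label (Suc n) c of LLeaf \<Rightarrow> True | LNode j _ \<Rightarrow> j = Suc n" for c
    by (cases c) auto
  then show ?case using 2 by (cases "cs = []") (auto simp: last_mirror_labels)
qed auto

definition dominates :: "nat list \<Rightarrow> nat list \<Rightarrow> bool" where
  "dominates v w \<longleftrightarrow> (\<forall>x\<in>set v. \<forall>y\<in>set w. y \<le> x)"

lemma avoids213I:
  "(\<And>i j k. i < j \<Longrightarrow> j < k \<Longrightarrow> k < length w \<Longrightarrow> w ! i < w ! k \<Longrightarrow> w ! j < w ! i \<Longrightarrow> False)
     \<Longrightarrow> avoids213 w"
  unfolding avoids213_def by blast

lemma avoids213D:
  "avoids213 w \<Longrightarrow> i < j \<Longrightarrow> j < k \<Longrightarrow> k < length w \<Longrightarrow> w ! i < w ! k \<Longrightarrow> w ! j < w ! i \<Longrightarrow> False"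
  unfolding avoids213_def by blast

lemma avoids213_infix: "avoids213 (P @ V @ Q) \<Longrightarrow> avoids213 V"
proof (rule avoids213I)
  fix i j k assume "avoids213 (P @ V @ Q)" "i < j" "j < k" "k < length V"
    "V ! i < V ! k" "V ! j < V ! i"
  then show False
    using avoids213D[of "P @ V @ Q" "length P + i" "length P + j" "length P + k"]
    by (simp add: nth_append)
qed

lemma avoids213_append:
  assumes "avoids213 X" "avoids213 Y" "dominates X Y"
  shows "avoids213 (X @ Y)"
proof (rule avoids213I)
  fix i j k assume ijk: "i < j" "j < k" "k < length (X @ Y)"
    and pattern: "(X @ Y) ! i < (X @ Y) ! k" "(X @ Y) ! j < (X @ Y) ! i"
  consider "k < length X" | "i < length X" "length X \<le> k" | "length X \<le> i" by linarith
  then show False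
  proof cases
    case 1
    then show False using avoids213D[OF assms(1) ijk(1,2) 1] pattern ijk by (simp add: nth_append)
  next
    case 2
    then have "(X @ Y) ! i \<in> set X" "(X @ Y) ! k \<in> set Y" using ijk(3) by (auto simp: nth_append)
    then show False using assms(3) pattern(1) unfolding dominates_def by fastforce
  next
    case 3
    then have "i - length X < j - length X" "j - length X < k - length X" "k - length X < length Y"
      using ijk by auto
    then show False
      using avoids213D[OF assms(2)] ijk pattern 3 by (simp add: nth_append)
  qed
qed

lemma avoids213_Cons:
  assumes "avoids213 V" "\<forall>v\<in>set V. n \<le> v"
  shows "avoids213 (n # V)"
proof (rule avoids213I)
  fix i j k assume ijk: "i < j" "j < k" "k < length (n # V)"
    and pattern: "(n # V) ! i < (n # V) ! k" "(n # V) ! j < (n # V) ! i"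
  obtain j' k' where jk: "j = Suc j'" "k = Suc k'" using ijk by (cases j; cases k) auto
  show False
  proof (cases i)
    case 0
    then show False using assms(2) pattern(2) jk ijk by (auto dest: nth_mem leD)
  next
    case (Suc i')
    then show False using avoids213D[OF assms(1), of i' j' k'] ijk pattern jk by auto
  qed
qed

lemma avoids213_separator:
  assumes "avoids213 (X @ k # Y)" "x \<in> set X" "y \<in> set Y" "k < x"
  shows "y \<le> x"
proof (rule ccontr)
  assume "\<not> y \<le> x"
  obtain i where i: "i < length X" "X ! i = x" using assms(2) by (auto simp: in_set_conv_nth)
  obtain j where j: "j < length Y" "Y ! j = y" using assms(3) by (auto simp: in_set_conv_nth)
  show False
    using avoids213D[OF assms(1), of i "length X" "length X + Suc j"] i j assms(4) \<open>\<not> y \<le> x\<close>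
    by (simp add: nth_append)
qed

text \<open>The root label is below all other letters of the word, so it can play the 1 of a pattern
  213 whose other letters lie in two different children.\<close>
lemma avoids213_wjoin_iff:
  "\<forall>w\<in>set ws. \<forall>v\<in>set w. k < v
     \<Longrightarrow> avoids213 (wjoin k ws) \<longleftrightarrow> (\<forall>w\<in>set ws. avoids213 w) \<and> sorted_wrt dominates ws"
proof (induction k ws rule: wjoin.induct)
  case (1 k)
  then show ?case by (simp add: avoids213_def)
next
  case (3 k x y r)
  let ?W = "wjoin k (y # r)"
  have word: "wjoin k (x # y # r) = x @ (k # ?W)" by simp
  have above_k: "\<forall>v\<in>set ?W. k \<le> v"
    using 3(2) set_wjoin_subset[of k "y # r"] by fastforce
  show ?case
  proof
    assume av: "avoids213 (wjoin k (x # y # r))"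
    have "avoids213 x" using avoids213_infix[of "[]" x "k # ?W"] av word by simp
    moreover have "avoids213 ?W" using avoids213_infix[of "x @ [k]" ?W "[]"] av word by simp
    moreover have "dominates x v" if "v \<in> set (y # r)" for v
      unfolding dominates_def
      using avoids213_separator[of x k ?W] av word 3(2) set_subset_wjoin[OF that, of k] by fastforce
    ultimately show "(\<forall>w\<in>set (x # y # r). avoids213 w) \<and> sorted_wrt dominates (x # y # r)"
      using 3 by auto
  next
    assume "(\<forall>w\<in>set (x # y # r). avoids213 w) \<and> sorted_wrt dominates (x # y # r)"
    then have "avoids213 x" "avoids213 ?W" "\<forall>v\<in>set (y # r). dominates x v" using 3 by auto
    moreover have "dominates x (k # ?W)"
      using \<open>\<forall>v\<in>set (y # r). dominates x v\<close> 3(2) set_wjoin_subset[of k "y # r"]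
      unfolding dominates_def by fastforce
    ultimately show "avoids213 (wjoin k (x # y # r))"
      using avoids213_append avoids213_Cons above_k word by metis
  qed
qed simp

lemma sorted_dominates_words:
  "sorted_wrt (\<lambda>g h. dominates (labels g) (labels h)) gs \<Longrightarrow> sorted_wrt dominates (map word gs)"
  unfolding sorted_wrt_map
proof (rule sorted_wrt_mono_rel[rotated])
  show "dominates (word g) (word h)" if "dominates (labels g) (labels h)" for g h
    using that set_word_subset[of g] set_word_subset[of h] unfolding dominates_def by blast
qed

lemma avoids213_mirror_label:
  shows "avoids213 (word (mirror_label n t))"
    and "(\<forall>x\<in>set (mirror_labels n cs). avoids213 (word x))
           \<and> sorted_wrt (\<lambda>g h. dominates (labels g) (labels h)) (mirror_labels n cs)"
proof (induction n t and n cs rule: mirror_label_mirror_labels.induct)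
  case (1 n)
  then show ?case by (simp add: avoids213_def)
next
  case (2 n cs)
  have bound: "\<forall>w\<in>set (map word (mirror_labels (Suc n) cs)). \<forall>v\<in>set w. n < v"
  proof (intro ballI)
    fix w v assume "w \<in> set (map word (mirror_labels (Suc n) cs))" "v \<in> set w"
    then obtain x where "x \<in> set (mirror_labels (Suc n) cs)" "v \<in> set (labels x)"
      using set_word_subset by auto
    then have "v \<in> set (concat (map labels (mirror_labels (Suc n) cs)))" by auto
    then have "v \<in> {Suc n..<Suc n + sum_list (map internal_nodes cs)}"
      using labels_mirror_label(2)[of "Suc n" cs] by blast
    then show "n < v" by simp
  qed
  have "sorted_wrt dominates (map word (mirror_labels (Suc n) cs))"
    using 2 sorted_dominates_words by blast
  moreover have "\<forall>w\<in>set (map word (mirror_labels (Suc n) cs)). avoids213 w" using 2 by auto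
  ultimately show ?case using avoids213_wjoin_iff[OF bound] by simp
next
  case (4 n c cs)
  let ?m = "n + sum_list (map internal_nodes cs)"
  have "dominates (labels (mirror_label ?m c)) (labels h)" if "h \<in> set (mirror_labels n cs)" for h
  proof -
    have "set (labels h) \<subseteq> set (concat (map labels (mirror_labels n cs)))"
      using that by auto
    then have "set (labels h) \<subseteq> {n..<?m}"
      using labels_mirror_label(2)[of n cs] by simp
    then show ?thesis
      using labels_mirror_label(1)[of ?m c] unfolding dominates_def by auto
  qed
  then show ?case using 4 by simp
qed simp

lemma interval_split:
  fixes A B :: "nat set"
  assumes "A \<inter> B = {}" "A \<union> B = {m..<m + T}" "\<forall>x\<in>A. \<forall>y\<in>B. y < x" "card B = T'"
  shows "B = {m..<m + T'}" "A = {m + T'..<m + T}"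
proof -
  have "finite B" using assms(2) by (metis finite_Un finite_atLeastLessThan)
  have "B \<subseteq> {m..<m + T'}"
  proof
    fix y assume y: "y \<in> B"
    then have "m \<le> y" "y < m + T" using assms(2) by auto
    have "{m..y} \<subseteq> B"
    proof
      fix z assume z: "z \<in> {m..y}"
      then have "z \<in> A \<union> B" using assms(2) \<open>y < m + T\<close> by auto
      moreover have "z \<notin> A" using assms(3) y z by fastforce
      ultimately show "z \<in> B" by blast
    qed
    then have "card {m..y} \<le> T'" using card_mono[OF \<open>finite B\<close>] assms(4) by blast
    then show "y \<in> {m..<m + T'}" using \<open>m \<le> y\<close> by simp
  qed
  moreover have "card {m..<m + T'} = card B" using assms(4) by simp
  ultimately show B: "B = {m..<m + T'}" by (simp add: card_subset_eq)
  have "A = {m..<m + T} - B" using assms(1,2) by blast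
  moreover have "T' \<le> T" using B assms(2) by (metis Un_upper2 card_atLeastLessThan card_mono
      diff_add_inverse finite_atLeastLessThan)
  ultimately show "A = {m + T'..<m + T}" using B by auto
qed

lemma root_label_interval:
  assumes "increasing (LNode k cs)" "distinct (labels (LNode k cs))"
    and "set (labels (LNode k cs)) = {n..<n + length (labels (LNode k cs))}"
  shows "k = n"
    and "set (concat (map labels cs)) = {Suc n..<Suc n + length (concat (map labels cs))}"
proof -
  have "n \<in> set (labels (LNode k cs))" "k \<in> {n..<n + length (labels (LNode k cs))}"
    using assms(3) by auto
  then show "k = n" using increasing_root_less[OF assms(1)] by fastforce
  have "insert k (set (concat (map labels cs))) = {n..<n + Suc (length (concat (map labels cs)))}"
    using assms(3) by simp
  moreover have "k \<notin> set (concat (map labels cs))" using assms(2) by simp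
  ultimately have "set (concat (map labels cs)) = {n..<n + Suc (length (concat (map labels cs)))} - {n}"
    using \<open>k = n\<close> by blast
  then show "set (concat (map labels cs)) = {Suc n..<Suc n + length (concat (map labels cs))}"
    by auto
qed

lemma mirror_labels_unique:
  assumes "sorted_wrt (\<lambda>g h. dominates (labels g) (labels h)) gs"
    and "distinct (concat (map labels gs))"
    and "set (concat (map labels gs)) = {m..<m + length (concat (map labels gs))}"
    and "\<And>c m'. c \<in> set gs \<Longrightarrow> set (labels c) = {m'..<m' + length (labels c)}
           \<Longrightarrow> c = mirror_label m' (pi c)"
  shows "gs = mirror_labels m (map pi gs)"
  using assms
proof (induction gs arbitrary: m)
  case (Cons g gs)
  let ?L' = "length (concat (map labels gs))"
  have above: "\<forall>x\<in>set (labels g). \<forall>y\<in>set (concat (map labels gs)). y < x"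
  proof (intro ballI)
    fix x y assume x: "x \<in> set (labels g)" and y: "y \<in> set (concat (map labels gs))"
    then obtain h where "h \<in> set gs" "y \<in> set (labels h)" by auto
    then have "y \<le> x" using Cons.prems(1) x unfolding dominates_def by simp
    moreover have "y \<noteq> x" using Cons.prems(2) x y by auto
    ultimately show "y < x" by simp
  qed
  have disjoint: "set (labels g) \<inter> set (concat (map labels gs)) = {}"
    and union: "set (labels g) \<union> set (concat (map labels gs)) = {m..<m + (length (labels g) + ?L')}"
    using Cons.prems(2,3) by auto
  have "card (set (concat (map labels gs))) = ?L'"
    using Cons.prems(2) by (intro distinct_card) simp
  note split = interval_split[OF disjoint union above this]
  have "gs = mirror_labels m (map pi gs)" "g = mirror_label (m + ?L') (pi g)"
    using Cons split by (simp_all add: ac_simps)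
  moreover have "?L' = sum_list (map internal_nodes (map pi gs))"
    by (simp add: length_concat length_labels comp_def)
  ultimately show ?case by simp
qed simp

lemma mirror_label_unique:
  "lwf g \<Longrightarrow> increasing g \<Longrightarrow> distinct (labels g) \<Longrightarrow> set (labels g) = {n..<n + length (labels g)}
     \<Longrightarrow> avoids213 (word g) \<Longrightarrow> g = mirror_label n (pi g)"
proof (induction g arbitrary: n)
  case (LNode k cs)
  note root = root_label_interval[OF LNode.prems(2-4)]
  have "\<forall>w\<in>set (map word cs). \<forall>v\<in>set w. k < v"
    using increasing_root_less[OF LNode.prems(2)] set_word_subset by fastforce
  then have sorted_words: "sorted_wrt dominates (map word cs)"
    and "\<forall>c\<in>set cs. avoids213 (word c)"
    using avoids213_wjoin_iff LNode.prems(5) by auto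
  have "sorted_wrt (\<lambda>g h. dominates (labels g) (labels h)) cs"
    using sorted_words unfolding sorted_wrt_map
  proof (rule sorted_wrt_mono_rel[rotated])
    show "dominates (labels g) (labels h)"
      if "g \<in> set cs" "h \<in> set cs" "dominates (word g) (word h)" for g h
      using that LNode.prems(1) set_word[of g] set_word[of h] unfolding dominates_def by simp
  qed
  then have "cs = mirror_labels (Suc n) (map pi cs)"
    using mirror_labels_unique LNode.IH LNode.prems(1-3) root(2)
      \<open>\<forall>c\<in>set cs. avoids213 (word c)\<close> by (auto simp: distinct_concat_iff)
  then show ?case using root(1) by simp
qed simp

lemma iota_eq_mirror_label: "ptree_wf t \<Longrightarrow> iota t = mirror_label 1 t"
  unfolding iota_def
proof (rule the_equality)
  show "gsp (mirror_label 1 t) \<and> pi (mirror_label 1 t) = t \<and> avoids213 (word (mirror_label 1 t))"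
    if "ptree_wf t" using that gsp_mirror_label avoids213_mirror_label(1) by simp
  show "u = mirror_label 1 t" if "gsp u \<and> pi u = t \<and> avoids213 (word u)" for u
  proof -
    have "set (labels u) = {1..<1 + length (labels u)}"
      using that unfolding gsp_def by (simp add: atLeastLessThanSuc_atLeastAtMost)
    then show ?thesis using that mirror_label_unique[of u 1] unfolding gsp_def by blast
  qed
qed

section \<open>From the planar Tamari order to the planar weak order\<close>

lemma distinct_concat_nth_unique:
  "distinct (concat xss) \<Longrightarrow> i < length xss \<Longrightarrow> j < length xss
     \<Longrightarrow> x \<in> set (xss ! i) \<Longrightarrow> x \<in> set (xss ! j) \<Longrightarrow> i = j"
proof (induction xss arbitrary: i j)
  case (Cons xs xss)
  have "x \<in> set (concat xss)" if "k < length xss" "x \<in> set (xss ! k)" for k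
    using that by (auto dest: nth_mem)
  then show ?case using Cons by (cases i; cases j) auto
qed simp

lemma exists_ascent_between_blocks:
  fixes B :: "nat \<Rightarrow> nat set"
  assumes "x < y" "i < j" "j < n" "x \<in> B i" "y \<in> B j" "\<forall>v\<in>{x..y}. \<exists>l<n. v \<in> B l"
  shows "\<exists>a i' j'. i' < j' \<and> j' < n \<and> a \<in> B i' \<and> Suc a \<in> B j'"
  using assms
proof (induction "y - x" arbitrary: x i rule: less_induct)
  case less
  obtain l where l: "l < n" "Suc x \<in> B l" using less.prems(1,6) by fastforce
  consider "i < l" | "Suc x = y" | "l \<le> i" "Suc x < y" using less.prems(1) by linarith
  then show ?case
  proof cases
    case 1
    then show ?thesis using l less.prems(4) by blast
  next
    case 2
    then show ?thesis using less.prems(2-5) by blast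
  next
    case 3
    then show ?thesis using less.hyps[of "Suc x" l] l less.prems(2,3,5,6) by fastforce
  qed
qed

definition upward_swap :: "nat \<Rightarrow> ltree \<Rightarrow> bool" where
  "upward_swap a g \<longleftrightarrow> a \<in> set (labels g) \<and> Suc a \<in> set (labels g) \<and> before (word g) a (Suc a)
     \<and> increasing (relabel (swap_adj a) g)"

lemma upward_swap_child:
  assumes "increasing (LNode k cs)" "distinct (labels (LNode k cs))" "c \<in> set cs"
    and "upward_swap a c"
  shows "upward_swap a (LNode k cs)"
proof -
  obtain l r where cs: "cs = l @ c # r" using split_list[OF assms(3)] by blast
  have c: "a \<in> set (labels c)" "Suc a \<in> set (labels c)" "before (word c) a (Suc a)"
    "increasing (relabel (swap_adj a) c)"
    using assms(4) unfolding upward_swap_def by auto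
  have "k < a" using increasing_root_less[OF assms(1,3) c(1)] .
  have "before (word (LNode k cs)) a (Suc a)"
    using before_word_child_iff assms(1,2) c(1-3) unfolding cs by blast
  moreover have "increasing (relabel (swap_adj a) x)" if "x \<in> set cs" for x
  proof (cases "x = c")
    case False
    then have "x \<in> set l \<union> set r" using that cs by auto
    then have "a \<notin> set (labels x)"
      using labels_siblings_disjoint[of k l c r x] assms(2) c(1) cs by auto
    moreover have "increasing x" using assms(1) that by simp
    ultimately show ?thesis using increasing_relabel_swap_adj by blast
  qed (use c(4) in simp)
  then have "increasing (relabel (swap_adj a) (LNode k cs))"
    using \<open>k < a\<close> by (intro increasing_relabel_swap_adj_LNode[OF assms(1)]) auto
  ultimately show ?thesis using assms(3) c(1,2) unfolding upward_swap_def by auto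
qed

lemma before_word_siblings:
  assumes "distinct (concat (map labels cs))" "k < a" "i < j" "j < length cs"
    and "a \<in> set (labels (cs ! i))" "Suc a \<in> set (labels (cs ! j))"
  shows "before (word (LNode k cs)) a (Suc a)"
proof -
  have in_child: "l = m" if "l < length cs" "m < length cs"
    "x \<in> set (labels (cs ! l))" "x \<in> set (labels (cs ! m))" for l m x
    using distinct_concat_nth_unique[OF assms(1), of l m x] that by simp
  have "word (LNode k cs) = (wjoin k (map word (take j cs)) @ [k]) @ wjoin k (map word (drop j cs))"
    using wjoin_append[of "map word (take j cs)" "map word (drop j cs)" k] assms(3,4)
    by (cases cs) (simp_all flip: map_append)
  moreover have "Suc a \<notin> set (wjoin k (map word (take j cs)))"
  proof (rule notin_wjoin_words)
    show "Suc a \<notin> set (labels c)" if c: "c \<in> set (take j cs)" for c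
    proof -
      obtain l where "l < length (take j cs)" "take j cs ! l = c"
        using c by (meson in_set_conv_nth)
      then show ?thesis using in_child[of l j "Suc a"] assms(4,6) by auto
    qed
  qed (use assms(2) in simp)
  moreover have "a \<notin> set (wjoin k (map word (drop j cs)))"
  proof (rule notin_wjoin_words)
    show "a \<notin> set (labels c)" if c: "c \<in> set (drop j cs)" for c
    proof -
      obtain l where "l < length (drop j cs)" "drop j cs ! l = c"
        using c by (meson in_set_conv_nth)
      moreover have "j + l < length cs" using \<open>l < length (drop j cs)\<close> by simp
      ultimately show ?thesis using in_child[of "j + l" i a] assms(3,5) by auto
    qed
  qed (use assms(2) in simp)
  ultimately show ?thesis using assms(2) by (simp add: before_appendI)
qed

lemma upward_swap_siblings:
  assumes "increasing (LNode k cs)" "distinct (labels (LNode k cs))" "i < j" "j < length cs"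
    and "a \<in> set (labels (cs ! i))" "Suc a \<in> set (labels (cs ! j))"
  shows "upward_swap a (LNode k cs)"
proof -
  have distinct: "distinct (concat (map labels cs))" using assms(2) by simp
  have "k < a" using increasing_root_less[OF assms(1) _ assms(5)] assms(3,4) by simp
  have "increasing (relabel (swap_adj a) c)" if c: "c \<in> set cs" for c
  proof -
    obtain l where "l < length cs" "cs ! l = c" using c by (auto simp: in_set_conv_nth)
    then have "\<not> (a \<in> set (labels c) \<and> Suc a \<in> set (labels c))"
      using distinct_concat_nth_unique[OF distinct, of l i a]
        distinct_concat_nth_unique[OF distinct, of l j "Suc a"] assms(3-6) by auto
    then show ?thesis using increasing_relabel_swap_adj assms(1) c by simp
  qed
  then have "increasing (relabel (swap_adj a) (LNode k cs))"
    using \<open>k < a\<close> by (intro increasing_relabel_swap_adj_LNode[OF assms(1)]) auto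
  moreover have "before (word (LNode k cs)) a (Suc a)"
    using before_word_siblings[OF distinct \<open>k < a\<close> assms(3-6)] .
  ultimately show ?thesis
    using assms(3-6) nth_mem[of i cs] nth_mem[of j cs] unfolding upward_swap_def by auto
qed

text \<open>The labelling \<open>mirror_label\<close> is the top of the planar weak order among GSPs on a fixed
  tree: any other one admits an upward swap, either inside a child or, if the label sets of the
  children do not decrease from left to right, between two children.\<close>
lemma exists_upward_swap:
  "lwf g \<Longrightarrow> increasing g \<Longrightarrow> distinct (labels g) \<Longrightarrow> set (labels g) = {n..<n + length (labels g)}
     \<Longrightarrow> g \<noteq> mirror_label n (pi g) \<Longrightarrow> \<exists>a. upward_swap a g"
proof (induction g arbitrary: n)
  case (LNode k cs)
  note root = root_label_interval[OF LNode.prems(2-4)]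
  have distinct: "distinct (concat (map labels cs))" using LNode.prems(3) by simp
  show ?case
  proof (cases "sorted_wrt (\<lambda>g h. dominates (labels g) (labels h)) cs")
    case True
    obtain c m where c: "c \<in> set cs" "set (labels c) = {m..<m + length (labels c)}"
      "c \<noteq> mirror_label m (pi c)"
      using mirror_labels_unique[OF True distinct root(2)] LNode.prems(5) root(1) by auto
    moreover have "lwf c" "increasing c" "distinct (labels c)"
      using LNode.prems(1-3) c(1) by (auto simp: distinct_concat_iff)
    ultimately obtain a where "upward_swap a c" using LNode.IH by blast
    then show ?thesis using upward_swap_child LNode.prems(2,3) c(1) by blast
  next
    case False
    then obtain i j where ij: "i < j" "j < length cs"
      and "\<not> dominates (labels (cs ! i)) (labels (cs ! j))"
      unfolding sorted_wrt_iff_nth_less by blast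
    then obtain x y where xy: "x \<in> set (labels (cs ! i))" "y \<in> set (labels (cs ! j))" "x < y"
      unfolding dominates_def by auto
    have "\<forall>v\<in>{x..y}. \<exists>l<length cs. v \<in> set (labels (cs ! l))"
    proof
      fix v assume "v \<in> {x..y}"
      moreover have "x \<in> set (concat (map labels cs))" "y \<in> set (concat (map labels cs))"
        using xy ij nth_mem[of i cs] nth_mem[of j cs] by auto
      ultimately have "v \<in> set (concat (map labels cs))" unfolding root(2) by auto
      then obtain c where "c \<in> set cs" "v \<in> set (labels c)" by auto
      then show "\<exists>l<length cs. v \<in> set (labels (cs ! l))" by (metis in_set_conv_nth)
    qed
    then obtain a i' j' where "i' < j'" "j' < length cs"
      "a \<in> set (labels (cs ! i'))" "Suc a \<in> set (labels (cs ! j'))"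
      using exists_ascent_between_blocks[OF xy(3) ij xy(1,2)] by blast
    then show ?thesis using upward_swap_siblings LNode.prems(2,3) by blast
  qed
qed simp

lemma pw_le_mirror_label:
  "gsp g \<Longrightarrow> pi g = t \<Longrightarrow> pw_le (word g) (word (mirror_label 1 t))"
proof (induction g rule: measure_induct_rule[where f = "\<lambda>g. internal_nodes t ^ 2 - card (iInv (word g))"])
  case (less g)
  show ?case
  proof (cases "g = mirror_label 1 t")
    case False
    have lwf: "lwf g" and labels: "set (labels g) = {1..<1 + length (labels g)}"
      using less.prems(1) unfolding gsp_def by (auto simp: atLeastLessThanSuc_atLeastAtMost)
    obtain a where "upward_swap a g"
      using exists_upward_swap[OF lwf _ _ labels] less.prems False unfolding gsp_def by blast
    then have a: "a \<in> set (labels g)" "Suc a \<in> set (labels g)" "before (word g) a (Suc a)"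
      and swapped: "swapped a g (relabel (swap_adj a) g)"
      using swapped_relabel[OF lwf] unfolding upward_swap_def by auto
    let ?h = "relabel (swap_adj a) g"
    have "gsp ?h" using gsp_swapped[OF less.prems(1) a(1,2) swapped] .
    have cover: "pw_cover (word g) (word ?h)" using pw_cover_swapped[OF less.prems(1) a swapped] .
    then have "card (iInv (word ?h)) = card (iInv (word g)) + 1"
      using card_iInv_map_swap_adj_eq_Suc_iff a set_word[OF lwf] by (simp add: word_relabel)
    moreover have "card (iInv (word ?h)) \<le> internal_nodes t ^ 2"
      using card_iInv_le[of "word ?h"] \<open>gsp ?h\<close> set_word length_labels[of ?h] less.prems(2)
      unfolding gsp_def by (simp add: pi_relabel power2_eq_square)
    ultimately have "pw_le (word ?h) (word (mirror_label 1 t))"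
      using less.IH \<open>gsp ?h\<close> less.prems(2) by (simp add: pi_relabel)
    then show ?thesis using cover unfolding pw_le_def by (rule converse_rtranclp_into_rtranclp[rotated])
  qed (simp add: pw_le_def)
qed

lemma left_rot_swapped:
  "left_rot s t \<Longrightarrow> lwf g \<Longrightarrow> increasing g \<Longrightarrow> distinct (labels g) \<Longrightarrow> last_child_succ g \<Longrightarrow> pi g = s
     \<Longrightarrow> \<exists>a h. a \<in> set (labels g) \<and> Suc a \<in> set (labels g) \<and> before (word g) a (Suc a)
           \<and> swapped a g h \<and> pi h = t"
proof (induction arbitrary: g rule: left_rot.induct)
  case (root cs ds d)
  obtain k gs where g: "g = LNode k gs" "map pi gs = cs @ [Node (d # ds)]"
    using root.prems(5) by (cases g) auto
  then obtain gl z where "gs = gl @ [z]" "map pi gl = cs" "pi z = Node (d # ds)"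
    by (auto simp: map_eq_append_conv)
  moreover obtain j gd gds where "z = LNode j (gd # gds)" "pi gd = d" "map pi gds = ds"
    using \<open>pi z = Node (d # ds)\<close> by (cases z) (auto simp: map_eq_Cons_conv)
  ultimately have gs: "gs = gl @ [LNode j (gd # gds)]"
    and pis: "map pi gl = cs" "pi gd = d" "map pi gds = ds" by auto
  have "j = Suc k" using root.prems(4) g gs by simp
  have "gl \<noteq> []" "gds \<noteq> []" using root.hyps pis by auto
  have g_def: "g = LNode k (gl @ [LNode (Suc k) (gd # gds)])" using g gs \<open>j = Suc k\<close> by simp
  let ?h = "LNode k (LNode (Suc k) (gl @ [gd]) # gds)"
  have "swapped k g ?h" "before (word g) k (Suc k)"
    using swapped_rotate_root(1,2)[OF root.prems(1-3)[unfolded g_def] \<open>gl \<noteq> []\<close> \<open>gds \<noteq> []\<close>]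
    unfolding g_def by blast+
  moreover have "pi ?h = Node (Node (cs @ [d]) # ds)" using pis by simp
  moreover have "k \<in> set (labels g)" "Suc k \<in> set (labels g)" using g gs \<open>j = Suc k\<close> by auto
  ultimately show ?case by blast
next
  case (sub c c' l r)
  obtain k gs where g: "g = LNode k gs" "map pi gs = l @ c # r"
    using sub.prems(5) by (cases g) auto
  then obtain gl gc gr where gs: "gs = gl @ gc # gr"
    and pis: "map pi gl = l" "pi gc = c" "map pi gr = r"
    by (auto simp: map_eq_append_conv map_eq_Cons_conv)
  have "lwf gc" "increasing gc" "distinct (labels gc)" "last_child_succ gc"
    using sub.prems(1-4) g gs by auto
  then obtain a hc where hc: "a \<in> set (labels gc)" "Suc a \<in> set (labels gc)"
    "before (word gc) a (Suc a)" "swapped a gc hc" "pi hc = c'"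
    using sub.IH pis(2) by blast
  have "swapped a g (LNode k (gl @ hc # gr))"
    using swapped_child sub.prems(1-3) hc(1,2,4) unfolding g(1) gs by blast
  moreover have "before (word g) a (Suc a)"
    using before_word_child_iff sub.prems(2,3) hc(1-3) unfolding g(1) gs by blast
  moreover have "pi (LNode k (gl @ hc # gr)) = Node (l @ c' # r)" using pis hc(5) by simp
  moreover have "a \<in> set (labels g)" "Suc a \<in> set (labels g)" using g gs hc(1,2) by auto
  ultimately show ?case by blast
qed

lemma left_rot_wf: "left_rot s t \<Longrightarrow> ptree_wf s \<Longrightarrow> ptree_wf t"
proof (induction rule: left_rot.induct)
  case (root cs ds d)
  then show ?case by (cases cs; cases ds) auto
qed auto

lemma pt_le_wf: "pt_le s t \<Longrightarrow> ptree_wf s \<Longrightarrow> ptree_wf t"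
  unfolding pt_le_def by (induction rule: rtranclp_induct) (auto intro: left_rot_wf)

lemma pw_le_mirror_label_left_rot:
  assumes "left_rot s t" "ptree_wf s"
  shows "pw_le (word (mirror_label 1 s)) (word (mirror_label 1 t))"
proof -
  let ?g = "mirror_label 1 s"
  have "gsp ?g" using gsp_mirror_label[OF assms(2)] .
  then have "lwf ?g" "increasing ?g" "distinct (labels ?g)" unfolding gsp_def by auto
  then obtain a h where a: "a \<in> set (labels ?g)" "Suc a \<in> set (labels ?g)"
    "before (word ?g) a (Suc a)" and h: "swapped a ?g h" "pi h = t"
    using left_rot_swapped[OF assms(1) _ _ _ last_child_succ_mirror_label(1) pi_mirror_label]
    by blast
  have "pw_cover (word ?g) (word h)" using pw_cover_swapped[OF \<open>gsp ?g\<close> a h(1)] .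
  moreover have "pw_le (word h) (word (mirror_label 1 t))"
    using pw_le_mirror_label gsp_swapped[OF \<open>gsp ?g\<close> a(1,2) h(1)] h(2) by blast
  ultimately show ?thesis unfolding pw_le_def by (rule converse_rtranclp_into_rtranclp)
qed

theorem gsp_le_iota_if_pt_le:
  assumes "pt_le s t" "ptree_wf s"
  shows "gsp_le (iota s) (iota t)"
proof -
  have "pw_le (word (mirror_label 1 s)) (word (mirror_label 1 t))"
    using assms unfolding pt_le_def
  proof (induction rule: rtranclp_induct)
    case (step t t')
    then have "pw_le (word (mirror_label 1 t)) (word (mirror_label 1 t'))"
      using pw_le_mirror_label_left_rot pt_le_wf[of s t] unfolding pt_le_def by blast
    then show ?case using step.IH[OF step.prems] unfolding pw_le_def by (meson rtranclp_trans)
  qed (simp add: pw_le_def)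
  then show ?thesis
    using iota_eq_mirror_label assms pt_le_wf unfolding gsp_le_def by simp
qed

theorem mainTheorem8:
  fixes u v :: ltree and s t :: ptree
  assumes "gsp u" and "gsp v"
    and "degree (pi u) = degree (pi v)"
    and "ptree_wf s" and "ptree_wf t"
    and "degree s = degree t"
  shows "(gsp_le u v \<longrightarrow> pt_le (pi u) (pi v))
       \<and> (pt_le s t \<longrightarrow> gsp_le (iota s) (iota t))"
  using pt_le_pi_if_gsp_le[OF assms(1,2)] gsp_le_iota_if_pt_le[OF _ assms(4)] by blast

end
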